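(* Let $q$ be a prime power, $m\ge2$, $\ell\ge1$, $r_1,\dots,r_m\ge1$, $\ell\le k<m\ell$, and $n=\sum_{i=1}^m(\ell+r_i)$. Let $C_1,\dots,C_m\in\mathbb{F}_q^{k\times\ell}$, $D_i\in\mathbb{F}_q^{k\times r_i}$ for $i<m$ and $D_m'\in\mathbb{F}_q^{k\times(r_m-1)}$ be such that the matrix $(C_1\mid D_1\mid\dots\mid C_{m-1}\mid D_{m-1}\mid C_m\mid D_m')$, with blocks $(C_i\mid D_i)$ for $i<m$ and $(C_m\mid D_m')$, generates an $[n-1,k,\ell;r_1,\dots,r_{m-1},r_m-1]$-PMDS code. Let $y_1,\dots,y_\ell$ be variables and let $$G(y)=(C_1\mid D_1\mid\dots\mid C_m\mid D_m'\mid \textstyle\sum_{t=1}^\ell y_tC_m^{(t)})\in\mathbb{F}_q[y_1,\dots,y_\ell]^{k\times n},$$ where $C_m^{(t)}$ is the $t$-th column of $C_m$, with blocks $(C_i\mid D_i)$ for $i<m$ and $(C_m\mid D_m'\mid\sum_t y_tC_m^{(t)})$ as the $m$-th block. Let $\mathcal T_{k,\ell}(G(y))$ be the set of $k\times k$ submatrices of $G(y)$ with at most $\ell$ columns in each block, and $\tilde p(y)=\mathrm{lcm}\{\det S\mid S\in\mathcal T_{k,\ell}(G(y))\}$. Then the total degree of $\tilde p$ is at most $$M^*:=M(k-1;\ell+r_1,\dots,\ell+r_{m-1},\ell+r_m-1;\ell,\dots,\ell,\ell-1).$$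
   Context: For positive integers $n_1,\dots,n_m$ with $n=\sum_i n_i$, nonnegative integers $f_1,\dots,f_m$ and an integer $k\ge0$, set $N_0=0$, $N_i=\sum_{j\le i}n_j$, $J_i=\{N_{i-1}+1,\dots,N_i\}$ for $i=1,\dots,m$, and let $M(k;n_1,\dots,n_m;f_1,\dots,f_m)$ be the number of subsets $I\subseteq\{1,\dots,n\}$ with $|I|=k$ and $|I\cap J_i|\le f_i$ for all $i$. An $[n,k]$-MDS code is a linear code of length $n$, dimension $k$, minimum Hamming distance $n-k+1$. PMDS codes: for integers $\ell\ge1$, $r_1,\dots,r_m\ge0$, $n=\sum_i(r_i+\ell)$, a linear code $C\subseteq\mathbb{F}^n$ of dimension $k<n$ with generator matrix $G=(B_1\mid\dots\mid B_m)$, $B_i\in\mathbb{F}^{k\times(r_i+\ell)}$, is an $[n,k,\ell;r_1,\dots,r_m]$-PMDS code if (i) each row space of $B_i$ is an $[r_i+\ell,\ell]$-MDS code, and (ii) for any choice of $r_i$ erased coordinates in block $i$ for every $i$, puncturing $C$ at them gives an $[m\ell,k]$-MDS code. *)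

theory Defs
  imports "HOL-Library.Poly_Mapping" "HOL-Combinatorics.Permutations"
begin

text \<open>Blocks are numbered 0,...,m-1; block i has length len i; coordinates are 0-based.\<close>

definition blk_start :: "(nat \<Rightarrow> nat) \<Rightarrow> nat \<Rightarrow> nat" where
  "blk_start len i = (\<Sum>j<i. len j)"

definition blk :: "(nat \<Rightarrow> nat) \<Rightarrow> nat \<Rightarrow> nat set" where
  "blk len i = {blk_start len i ..< blk_start len (Suc i)}"

definition Mcount :: "nat \<Rightarrow> nat \<Rightarrow> (nat \<Rightarrow> nat) \<Rightarrow> (nat \<Rightarrow> nat) \<Rightarrow> nat" where
  "Mcount k m len f = card {I. I \<subseteq> {..<blk_start len m} \<and> card I = k \<and>
       (\<forall>i<m. card (I \<inter> blk len i) \<le> f i)}"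

text \<open>Row space of the k-row matrix G (entries G i j), restricted to the coordinate set J
  (coordinates outside J are set to 0; this realises puncturing / taking sub-blocks).\<close>
definition rowsp :: "(nat \<Rightarrow> nat \<Rightarrow> 'a::field) \<Rightarrow> nat \<Rightarrow> nat set \<Rightarrow> (nat \<Rightarrow> 'a) set" where
  "rowsp G k J = {v. \<exists>c. v = (\<lambda>j. if j \<in> J then (\<Sum>i<k. c i * G i j) else 0)}"

definition code_dim :: "(nat \<Rightarrow> 'a::field) set \<Rightarrow> nat \<Rightarrow> bool" where
  "code_dim C d \<longleftrightarrow> (\<exists>b :: nat \<Rightarrow> nat \<Rightarrow> 'a.
      (\<forall>c. (\<forall>j. (\<Sum>i<d. c i * b i j) = 0) \<longrightarrow> (\<forall>i<d. c i = 0)) \<and>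
      C = {v. \<exists>c. v = (\<lambda>j. \<Sum>i<d. c i * b i j)})"

definition hdist :: "nat set \<Rightarrow> (nat \<Rightarrow> 'a) \<Rightarrow> (nat \<Rightarrow> 'a) \<Rightarrow> nat" where
  "hdist J x y = card {j \<in> J. x j \<noteq> y j}"

definition min_dist :: "nat set \<Rightarrow> (nat \<Rightarrow> 'a) set \<Rightarrow> nat" where
  "min_dist J C = Inf {hdist J x y | x y. x \<in> C \<and> y \<in> C \<and> x \<noteq> y}"

definition is_MDS :: "nat set \<Rightarrow> (nat \<Rightarrow> 'a::field) set \<Rightarrow> nat \<Rightarrow> bool" where
  "is_MDS J C d \<longleftrightarrow> code_dim C d \<and> min_dist J C = card J - d + 1"

definition is_PMDS :: "(nat \<Rightarrow> nat \<Rightarrow> 'a::field) \<Rightarrow> nat \<Rightarrow> nat \<Rightarrow> nat \<Rightarrow> (nat \<Rightarrow> nat) \<Rightarrow> bool" where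
  "is_PMDS G k l m r \<longleftrightarrow>
     (let len = (\<lambda>i. r i + l); n = blk_start len m in
       k < n \<and> code_dim (rowsp G k {..<n}) k \<and>
       (\<forall>i<m. is_MDS (blk len i) (rowsp G k (blk len i)) l) \<and>
       (\<forall>E. E \<subseteq> {..<n} \<and> (\<forall>i<m. card (E \<inter> blk len i) = r i) \<longrightarrow>
            is_MDS ({..<n} - E) (rowsp G k ({..<n} - E)) k))"

type_synonym 'a mpoly = "(nat \<Rightarrow>\<^sub>0 nat) \<Rightarrow>\<^sub>0 'a"

definition mp_const :: "'a::zero \<Rightarrow> 'a mpoly" where
  "mp_const c = Poly_Mapping.single 0 c"

definition mp_var :: "nat \<Rightarrow> 'a::{zero,one} mpoly" where
  "mp_var t = Poly_Mapping.single (Poly_Mapping.single t 1) 1"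

definition total_degree :: "'a::zero mpoly \<Rightarrow> nat" where
  "total_degree p = Max (insert 0 ((\<lambda>mn. \<Sum>v\<in>Poly_Mapping.keys mn. Poly_Mapping.lookup mn v) ` Poly_Mapping.keys p))"

definition detk :: "nat \<Rightarrow> (nat \<Rightarrow> nat \<Rightarrow> 'a::comm_ring_1) \<Rightarrow> 'a" where
  "detk k A = (\<Sum>p\<in>{p. p permutes {..<k}}. of_int (sign p) * (\<Prod>i<k. A i (p i)))"

definition is_lcm_of :: "'a::comm_ring_1 set \<Rightarrow> 'a \<Rightarrow> bool" where
  "is_lcm_of P p \<longleftrightarrow> (\<forall>a\<in>P. a dvd p) \<and> (\<forall>q. (\<forall>a\<in>P. a dvd q) \<longrightarrow> p dvd q)"

definition T_dets :: "(nat \<Rightarrow> nat \<Rightarrow> 'a::comm_ring_1) \<Rightarrow> nat \<Rightarrow> nat \<Rightarrow> nat \<Rightarrow> (nat \<Rightarrow> nat) \<Rightarrow> 'a set" where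
  "T_dets A k l m len = {detk k (\<lambda>i j. A i (sorted_list_of_set S ! j)) | S.
       S \<subseteq> {..<blk_start len m} \<and> card S = k \<and> (\<forall>i<m. card (S \<inter> blk len i) \<le> l)}"

end

theory Submission imports Defs begin

text \<open>Every determinant in the set has total degree at most 1, and degree 0 unless its column
  set contains the last column, the only one depending on the variables. The lcm divides the
  product of the nonzero determinants, so its degree is at most the number of admissible column
  sets containing the last column; deleting that column maps these sets injectively to the sets
  counted by \<open>M\<^sup>*\<close>.\<close>

definition monomial_degree :: "(nat \<Rightarrow>\<^sub>0 nat) \<Rightarrow> nat" where
  "monomial_degree \<alpha> = (\<Sum>v\<in>Poly_Mapping.keys \<alpha>. Poly_Mapping.lookup \<alpha> v)"

lemma monomial_degree_add: "monomial_degree (\<alpha> + \<beta>) = monomial_degree \<alpha> + monomial_degree \<beta>"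
  unfolding monomial_degree_def by (rule setsum_keys_plus_distrib) auto

lemma total_degree_le_iff:
  "total_degree (p :: 'a::zero mpoly) \<le> d \<longleftrightarrow> (\<forall>\<alpha>\<in>Poly_Mapping.keys p. monomial_degree \<alpha> \<le> d)"
  unfolding total_degree_def monomial_degree_def by auto

lemma monomial_degree_le_total_degree:
  "\<alpha> \<in> Poly_Mapping.keys (p :: 'a::zero mpoly) \<Longrightarrow> monomial_degree \<alpha> \<le> total_degree p"
  unfolding total_degree_def monomial_degree_def by auto

lemma total_degree_zero [simp]: "total_degree (0 :: 'a::zero mpoly) = 0"
  by (simp add: total_degree_def)

lemma total_degree_attained:
  assumes "(p :: 'a::zero mpoly) \<noteq> 0"
  obtains \<alpha> where "\<alpha> \<in> Poly_Mapping.keys p" "monomial_degree \<alpha> = total_degree p"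
proof -
  obtain \<beta> where \<beta>: "\<beta> \<in> Poly_Mapping.keys p"
    using assms keys_eq_empty by blast
  have "total_degree p \<in> insert 0 (monomial_degree ` Poly_Mapping.keys p)"
    unfolding total_degree_def monomial_degree_def by (rule Max_in) auto
  with \<beta> monomial_degree_le_total_degree[OF \<beta>] that show ?thesis by force
qed

lemma total_degree_mult_le:
  "total_degree ((p :: 'a::comm_ring_1 mpoly) * q) \<le> total_degree p + total_degree q"
  unfolding total_degree_le_iff
proof
  fix \<gamma> assume "\<gamma> \<in> Poly_Mapping.keys (p * q)"
  then obtain \<alpha> \<beta> where "\<gamma> = \<alpha> + \<beta>" "\<alpha> \<in> Poly_Mapping.keys p" "\<beta> \<in> Poly_Mapping.keys q"
    using keys_mult by blast
  then show "monomial_degree \<gamma> \<le> total_degree p + total_degree q"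
    using monomial_degree_le_total_degree[of \<alpha> p] monomial_degree_le_total_degree[of \<beta> q]
    by (simp add: monomial_degree_add)
qed

lemma total_degree_add_le:
  "total_degree ((p :: 'a::comm_ring_1 mpoly) + q) \<le> max (total_degree p) (total_degree q)"
  unfolding total_degree_le_iff
  using keys_add[of p q] monomial_degree_le_total_degree[of _ p] monomial_degree_le_total_degree[of _ q]
  by fastforce

lemma total_degree_sum_le:
  assumes "\<And>x. x \<in> A \<Longrightarrow> total_degree (f x :: 'a::comm_ring_1 mpoly) \<le> d"
  shows "total_degree (sum f A) \<le> d"
  using assms
proof (induction A rule: infinite_finite_induct)
  case (insert x F)
  then have "max (total_degree (f x)) (total_degree (sum f F)) \<le> d" by simp
  with total_degree_add_le[of "f x" "sum f F"] have "total_degree (f x + sum f F) \<le> d"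
    by (rule order_trans)
  with insert(1,2) show ?case by simp
qed simp_all

lemma total_degree_prod_le:
  "total_degree (prod (f :: _ \<Rightarrow> 'a::comm_ring_1 mpoly) A) \<le> (\<Sum>x\<in>A. total_degree (f x))"
proof (induction A rule: infinite_finite_induct)
  case (insert x F)
  then show ?case using total_degree_mult_le[of "f x" "prod f F"] by simp
qed (simp_all add: total_degree_def)

lemma total_degree_mp_const [simp]: "total_degree (mp_const c :: 'a::zero mpoly) = 0"
  unfolding le_zero_eq[symmetric] total_degree_le_iff
  by (auto simp: mp_const_def monomial_degree_def split: if_splits)

lemma total_degree_of_int [simp]: "total_degree (of_int c :: 'a::comm_ring_1 mpoly) = 0"
  using total_degree_mp_const[of "of_int c :: 'a"] by (simp add: mp_const_def)

lemma total_degree_mp_var_le: "total_degree (mp_var t :: 'a::comm_ring_1 mpoly) \<le> 1"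
  unfolding total_degree_le_iff by (auto simp: mp_var_def monomial_degree_def)

lemma total_degree_linear_form_le:
  "total_degree (\<Sum>t\<in>T. mp_var t * mp_const (c t) :: 'a::comm_ring_1 mpoly) \<le> 1"
proof (rule total_degree_sum_le)
  fix t
  have "total_degree (mp_var t * mp_const (c t) :: 'a mpoly) \<le> total_degree (mp_var t :: 'a mpoly)"
    using total_degree_mult_le[of "mp_var t" "mp_const (c t)"] by simp
  then show "total_degree (mp_var t * mp_const (c t) :: 'a mpoly) \<le> 1"
    using total_degree_mp_var_le order_trans by blast
qed

lemma total_degree_mult:
  fixes p q :: "'a::idom mpoly"
  assumes "p \<noteq> 0" "q \<noteq> 0"
  shows "total_degree (p * q) = total_degree p + total_degree q"
proof (rule antisym[OF total_degree_mult_le])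
  define top_keys where
    "top_keys f = {\<alpha> \<in> Poly_Mapping.keys f. monomial_degree \<alpha> = total_degree f}" for f :: "'a mpoly"
  have top_keys: "finite (top_keys f)" "top_keys f \<noteq> {}" if "f \<noteq> 0" for f
    using total_degree_attained[OF that] by (auto simp: top_keys_def)
  \<comment> \<open>The lexicographically largest top-degree monomials of \<open>p\<close> and \<open>q\<close> multiply to a
    monomial of \<open>p * q\<close> that arises in exactly one way.\<close>
  define \<alpha>\<^sub>0 where "\<alpha>\<^sub>0 = Max (top_keys p)"
  define \<beta>\<^sub>0 where "\<beta>\<^sub>0 = Max (top_keys q)"
  have \<alpha>\<^sub>0: "\<alpha>\<^sub>0 \<in> top_keys p" and \<beta>\<^sub>0: "\<beta>\<^sub>0 \<in> top_keys q"
    using top_keys assms by (auto simp: \<alpha>\<^sub>0_def \<beta>\<^sub>0_def)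
  have unique: "\<alpha> = \<alpha>\<^sub>0 \<and> \<beta> = \<beta>\<^sub>0"
    if "\<alpha> \<in> Poly_Mapping.keys p" "\<beta> \<in> Poly_Mapping.keys q" "\<alpha>\<^sub>0 + \<beta>\<^sub>0 = \<alpha> + \<beta>" for \<alpha> \<beta>
  proof -
    have "monomial_degree \<alpha> + monomial_degree \<beta> = total_degree p + total_degree q"
      using that(3) \<alpha>\<^sub>0 \<beta>\<^sub>0 by (metis (mono_tags) monomial_degree_add top_keys_def mem_Collect_eq)
    then have "\<alpha> \<in> top_keys p" "\<beta> \<in> top_keys q"
      using that monomial_degree_le_total_degree[of \<alpha> p] monomial_degree_le_total_degree[of \<beta> q]
      by (auto simp: top_keys_def)
    then have "\<alpha> \<le> \<alpha>\<^sub>0" "\<beta> \<le> \<beta>\<^sub>0" using top_keys assms by (auto simp: \<alpha>\<^sub>0_def \<beta>\<^sub>0_def)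
    with that(3) show ?thesis
      using add_less_le_mono[of \<alpha> \<alpha>\<^sub>0 \<beta> \<beta>\<^sub>0] add_le_less_mono[of \<alpha> \<alpha>\<^sub>0 \<beta> \<beta>\<^sub>0]
      by (auto simp: order.strict_iff_order)
  qed
  define f g where "f = Poly_Mapping.lookup p" and "g = Poly_Mapping.lookup q"
  have "Poly_Mapping.lookup (p * q) (\<alpha>\<^sub>0 + \<beta>\<^sub>0) = prod_fun f g (\<alpha>\<^sub>0 + \<beta>\<^sub>0)"
    by (simp add: times_poly_mapping.rep_eq f_def g_def)
  also have "\<dots> = (\<Sum>(\<alpha>, \<beta>). f \<alpha> * g \<beta> when \<alpha>\<^sub>0 + \<beta>\<^sub>0 = \<alpha> + \<beta>)"
    by (rule prod_fun_unfold_prod) (auto simp: f_def g_def)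
  also have "\<dots> = (\<Sum>\<gamma>. (case \<gamma> of (\<alpha>, \<beta>) \<Rightarrow> f \<alpha> * g \<beta>) when (\<alpha>\<^sub>0, \<beta>\<^sub>0) = \<gamma>)"
  proof (rule Sum_any.cong)
    fix \<gamma> :: "(nat \<Rightarrow>\<^sub>0 nat) \<times> (nat \<Rightarrow>\<^sub>0 nat)"
    obtain \<alpha> \<beta> where \<gamma>: "\<gamma> = (\<alpha>, \<beta>)" by (cases \<gamma>)
    show "(case \<gamma> of (\<alpha>, \<beta>) \<Rightarrow> f \<alpha> * g \<beta> when \<alpha>\<^sub>0 + \<beta>\<^sub>0 = \<alpha> + \<beta>) =
      ((case \<gamma> of (\<alpha>, \<beta>) \<Rightarrow> f \<alpha> * g \<beta>) when (\<alpha>\<^sub>0, \<beta>\<^sub>0) = \<gamma>)"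
      using unique[of \<alpha> \<beta>] unfolding \<gamma>
      by (cases "f \<alpha> * g \<beta> = 0") (auto simp: when_def f_def g_def in_keys_iff)
  qed
  also have "\<dots> = f \<alpha>\<^sub>0 * g \<beta>\<^sub>0" by simp
  also have "\<dots> \<noteq> 0" using \<alpha>\<^sub>0 \<beta>\<^sub>0 by (simp add: top_keys_def f_def g_def in_keys_iff)
  finally have "\<alpha>\<^sub>0 + \<beta>\<^sub>0 \<in> Poly_Mapping.keys (p * q)" by (simp add: in_keys_iff)
  from monomial_degree_le_total_degree[OF this] \<alpha>\<^sub>0 \<beta>\<^sub>0
  show "total_degree p + total_degree q \<le> total_degree (p * q)"
    by (simp add: top_keys_def monomial_degree_add)
qed

lemma total_degree_dvd_le:
  fixes p q :: "'a::idom mpoly"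
  assumes "p dvd q" "q \<noteq> 0"
  shows "total_degree p \<le> total_degree q"
proof -
  obtain c where c: "q = p * c" using assms(1) by blast
  with assms(2) have "p \<noteq> 0" "c \<noteq> 0" by auto
  with c show ?thesis by (simp add: total_degree_mult)
qed

lemma total_degree_lcm_le_sum:
  fixes P :: "'a::idom mpoly set"
  assumes "finite P" "is_lcm_of P p"
  shows "total_degree p \<le> (\<Sum>a\<in>P. total_degree a)"
proof (cases "0 \<in> P")
  case True
  with assms(2) show ?thesis by (auto simp: is_lcm_of_def)
next
  case False
  with assms(1) have "\<Prod>P \<noteq> 0" by simp
  moreover have "p dvd \<Prod>P" using assms by (auto simp: is_lcm_of_def)
  ultimately have "total_degree p \<le> total_degree (\<Prod>P)" by (rule total_degree_dvd_le[rotated])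
  also have "\<dots> \<le> (\<Sum>a\<in>P. total_degree a)" by (rule total_degree_prod_le)
  finally show ?thesis .
qed

lemma total_degree_detk_le:
  fixes A :: "nat \<Rightarrow> nat \<Rightarrow> 'a::comm_ring_1 mpoly"
  assumes "\<And>i j. i < k \<Longrightarrow> j < k \<Longrightarrow> total_degree (A i j) \<le> d j"
  shows "total_degree (detk k A) \<le> (\<Sum>j<k. d j)"
  unfolding detk_def
proof (rule total_degree_sum_le)
  fix \<sigma> assume "\<sigma> \<in> {\<sigma>. \<sigma> permutes {..<k}}"
  then have \<sigma>: "\<sigma> permutes {..<k}" by simp
  have "total_degree (of_int (sign \<sigma>) * (\<Prod>i<k. A i (\<sigma> i))) \<le> total_degree (\<Prod>i<k. A i (\<sigma> i))"
    using total_degree_mult_le[of "of_int (sign \<sigma>)"] by simp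
  also have "\<dots> \<le> (\<Sum>i<k. total_degree (A i (\<sigma> i)))" by (rule total_degree_prod_le)
  also have "\<dots> \<le> (\<Sum>i<k. d (\<sigma> i))"
    using assms permutes_in_image[OF \<sigma>] by (intro sum_mono) simp
  also have "\<dots> = (\<Sum>j<k. d j)" using sum.permute[OF \<sigma>, of d] by (simp add: comp_def)
  finally show "total_degree (of_int (sign \<sigma>) * (\<Prod>i<k. A i (\<sigma> i))) \<le> (\<Sum>j<k. d j)" .
qed

lemma total_degree_detk_columns_le:
  fixes A :: "nat \<Rightarrow> nat \<Rightarrow> 'a::comm_ring_1 mpoly"
  assumes "finite S" "card S = k"
    and "\<And>i j. j \<in> S \<Longrightarrow> total_degree (A i j) \<le> (if j = n\<^sub>0 then 1 else 0)"
  shows "total_degree (detk k (\<lambda>i j. A i (sorted_list_of_set S ! j))) \<le> (if n\<^sub>0 \<in> S then 1 else 0)"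
proof -
  define cs where "cs = sorted_list_of_set S"
  have cs: "length cs = k" "distinct cs" "set cs = S" using assms(1,2) by (simp_all add: cs_def)
  have "total_degree (detk k (\<lambda>i j. A i (cs ! j))) \<le> (\<Sum>j<k. if cs ! j = n\<^sub>0 then 1 else 0)"
    using assms(3) cs by (intro total_degree_detk_le) (metis nth_mem)
  also have "\<dots> = card {j \<in> {..<k}. cs ! j = n\<^sub>0}" by (simp add: sum.If_cases Int_def)
  also have "\<dots> \<le> (if n\<^sub>0 \<in> S then 1 else 0)"
  proof -
    have "card {j \<in> {..<k}. cs ! j = n\<^sub>0} \<le> Suc 0"
      using cs by (subst card_le_Suc0_iff_eq) (auto simp: nth_eq_iff_index_eq)
    moreover have "n\<^sub>0 \<notin> S \<Longrightarrow> {j \<in> {..<k}. cs ! j = n\<^sub>0} = {}" using cs nth_mem by fastforce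
    ultimately show ?thesis by auto
  qed
  finally show ?thesis by (simp add: cs_def)
qed

definition block_bounded_sets :: "nat \<Rightarrow> nat \<Rightarrow> (nat \<Rightarrow> nat) \<Rightarrow> (nat \<Rightarrow> nat) \<Rightarrow> nat set set" where
  "block_bounded_sets k m len f =
     {I. I \<subseteq> {..<blk_start len m} \<and> card I = k \<and> (\<forall>i<m. card (I \<inter> blk len i) \<le> f i)}"

lemma Mcount_eq_card: "Mcount k m len f = card (block_bounded_sets k m len f)"
  by (simp add: Mcount_def block_bounded_sets_def)

lemma T_dets_eq_image:
  "T_dets A k l m len =
     (\<lambda>S. detk k (\<lambda>i j. A i (sorted_list_of_set S ! j))) ` block_bounded_sets k m len (\<lambda>_. l)"
  by (auto simp: T_dets_def block_bounded_sets_def)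

lemma finite_block_bounded_sets: "finite (block_bounded_sets k m len f)"
  by (rule finite_subset[of _ "Pow {..<blk_start len m}"]) (auto simp: block_bounded_sets_def)

lemma blk_start_Suc: "blk_start len (Suc i) = blk_start len i + len i"
  by (simp add: blk_start_def)

lemma blk_start_mono: "i \<le> j \<Longrightarrow> blk_start len i \<le> blk_start len j"
  unfolding blk_start_def by (rule sum_mono2) auto

lemma card_block_bounded_sets_with_last_le:
  fixes len f :: "nat \<Rightarrow> nat"
  assumes "len m \<ge> 1"
  defines "n\<^sub>0 \<equiv> blk_start len (Suc m) - 1"
  shows "card {S \<in> block_bounded_sets k (Suc m) len f. n\<^sub>0 \<in> S}
    \<le> card (block_bounded_sets (k - 1) (Suc m) (len(m := len m - 1)) (f(m := f m - 1)))"
    (is "card ?A \<le> card (block_bounded_sets _ _ ?len' ?f')")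
proof -
  have start: "i \<le> m \<Longrightarrow> blk_start ?len' i = blk_start len i" for i
    unfolding blk_start_def by (rule sum.cong) auto
  have n\<^sub>0: "n\<^sub>0 = blk_start len m + len m - 1"
    by (simp add: n\<^sub>0_def blk_start_Suc)
  have end': "blk_start ?len' (Suc m) = n\<^sub>0"
    using start[of m] assms(1) by (simp add: blk_start_Suc n\<^sub>0)
  have blk_before: "blk ?len' i = blk len i" "n\<^sub>0 \<notin> blk len i" if "i < m" for i
    using that start[of i] start[of "Suc i"] blk_start_mono[of "Suc i" m len] assms(1)
    by (auto simp: blk_def n\<^sub>0)
  have blk_last: "blk ?len' m = blk len m - {n\<^sub>0}" "n\<^sub>0 \<in> blk len m"
    using start[of m] assms(1) by (auto simp: blk_def blk_start_Suc n\<^sub>0)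
  have "S - {n\<^sub>0} \<in> block_bounded_sets (k - 1) (Suc m) ?len' ?f'" if "S \<in> ?A" for S
  proof -
    have S: "S \<subseteq> {..<blk_start len (Suc m)}" "card S = k" "n\<^sub>0 \<in> S"
      "\<And>i. i < Suc m \<Longrightarrow> card (S \<inter> blk len i) \<le> f i"
      using that by (auto simp: block_bounded_sets_def)
    have fin: "finite S" using S(1) finite_subset by blast
    have "card ((S - {n\<^sub>0}) \<inter> blk ?len' i) \<le> ?f' i" if "i < Suc m" for i
    proof (cases "i = m")
      case True
      then have "(S - {n\<^sub>0}) \<inter> blk ?len' i = (S \<inter> blk len m) - {n\<^sub>0}" using blk_last by auto
      moreover have "n\<^sub>0 \<in> S \<inter> blk len m" using S(3) blk_last(2) by blast
      ultimately show ?thesis using True S(4)[of m] fin by simp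
    next
      case False
      with that blk_before have "(S - {n\<^sub>0}) \<inter> blk ?len' i = S \<inter> blk len i" by auto
      with False S(4)[OF that] show ?thesis by simp
    qed
    moreover have "S - {n\<^sub>0} \<subseteq> {..<blk_start ?len' (Suc m)}"
      unfolding end' using S(1) by (auto simp: n\<^sub>0_def)
    ultimately show ?thesis using S(2,3) fin by (simp add: block_bounded_sets_def)
  qed
  moreover have "inj_on (\<lambda>S. S - {n\<^sub>0}) ?A" by (rule inj_onI) auto
  ultimately show ?thesis
    by (intro card_inj_on_le[OF _ _ finite_block_bounded_sets]) auto
qed

lemma total_degree_lcm_T_dets_le:
  fixes A :: "nat \<Rightarrow> nat \<Rightarrow> 'a::idom mpoly" and len :: "nat \<Rightarrow> nat" and m :: nat
  defines "n\<^sub>0 \<equiv> blk_start len (Suc m) - 1"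
  assumes lcm: "is_lcm_of (T_dets A k l (Suc m) len) p"
    and "len m \<ge> 1"
    and "\<And>i j. j < n\<^sub>0 \<Longrightarrow> total_degree (A i j) = 0"
    and "\<And>i. total_degree (A i n\<^sub>0) \<le> 1"
  shows "total_degree p \<le> Mcount (k - 1) (Suc m) (len(m := len m - 1)) ((\<lambda>_. l)(m := l - 1))"
proof -
  define det where "det S = detk k (\<lambda>i j. A i (sorted_list_of_set S ! j))" for S
  define Ss where "Ss = block_bounded_sets k (Suc m) len (\<lambda>_. l)"
  have fin: "finite Ss" by (simp add: Ss_def finite_block_bounded_sets)
  have det_le: "total_degree (det S) \<le> (if n\<^sub>0 \<in> S then 1 else 0)" if "S \<in> Ss" for S
  proof -
    have S: "S \<subseteq> {..n\<^sub>0}" "card S = k"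
      using that by (auto simp: Ss_def block_bounded_sets_def n\<^sub>0_def)
    then show ?thesis unfolding det_def using assms(4,5)
      by (intro total_degree_detk_columns_le) (auto intro: finite_subset simp: nat_less_le)
  qed
  have "total_degree p \<le> (\<Sum>a\<in>det ` Ss. total_degree a)"
    using lcm fin by (intro total_degree_lcm_le_sum) (simp_all add: T_dets_eq_image det_def Ss_def)
  also have "\<dots> \<le> (\<Sum>S\<in>Ss. total_degree (det S))"
    using sum_image_le[OF fin, of total_degree det] by (simp add: comp_def)
  also have "\<dots> \<le> (\<Sum>S\<in>Ss. if n\<^sub>0 \<in> S then 1 else 0)" by (rule sum_mono) (rule det_le)
  also have "\<dots> = card {S \<in> Ss. n\<^sub>0 \<in> S}" using fin by (simp add: sum.If_cases Int_def)
  also have "\<dots> \<le> Mcount (k - 1) (Suc m) (len(m := len m - 1)) ((\<lambda>_. l)(m := l - 1))"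
    unfolding Mcount_eq_card Ss_def n\<^sub>0_def
    using card_block_bounded_sets_with_last_le[where len = len and m = m, OF assms(3)] by simp
  finally show ?thesis .
qed

theorem proposition23:
  fixes G' :: "nat \<Rightarrow> nat \<Rightarrow> 'a::{field,finite}"
    and m l k :: nat and r :: "nat \<Rightarrow> nat"
  assumes "m \<ge> 2" and "l \<ge> 1" and "\<forall>i<m. r i \<ge> 1"
    and "l \<le> k" and "k < m * l"
    and "is_PMDS G' k l m (r(m - 1 := r (m - 1) - 1))"
  shows "\<forall>p. is_lcm_of
            (T_dets (\<lambda>i j. if j < blk_start (\<lambda>i. l + r i) m - 1 then mp_const (G' i j)
                          else (\<Sum>t<l. mp_var t * mp_const (G' i (blk_start (\<lambda>i. l + r i) (m - 1) + t))))
                    k l m (\<lambda>i. l + r i)) p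
          \<longrightarrow> total_degree p \<le>
              Mcount (k - 1) m (\<lambda>i. if i = m - 1 then l + r i - 1 else l + r i)
                     (\<lambda>i. if i = m - 1 then l - 1 else l)"
proof -
  obtain m' where m: "m = Suc m'" using assms(1) by (cases m) auto
  have len_eq: "(\<lambda>i. if i = m - 1 then l + r i - 1 else l + r i) = (\<lambda>i. l + r i)(m' := l + r m' - 1)"
    and bound_eq: "(\<lambda>i. if i = m - 1 then l - 1 else l) = (\<lambda>_. l)(m' := l - 1)"
    by (auto simp: m)
  show ?thesis
    unfolding len_eq bound_eq unfolding m diff_Suc_1
  proof (intro allI impI, erule total_degree_lcm_T_dets_le)
    show "1 \<le> l + r m'" using assms(2) by simp
  qed (simp_all add: total_degree_linear_form_le[unfolded One_nat_def])
qed

end
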